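(* Let $w$ be a string of length $n$ and $i$ a position of $w$ with $i-\mu(i)\ge1$, $i+\mu(i)-1\le n$ and $\mu(i)>1$. Suppose $j$ is an integer with $i<j<i+\mu(i)$ such that $\mu(j')<\mu(i)$ for each $j'$ with $i<j'\le j$. Then $w[j-\mu(j)..j+\mu(j)-1]$ is a substring of $w[i-\mu(i)..i+\mu(i)-1]$, in the sense that $i-\mu(i)\le j-\mu(j)$ and $j+\mu(j)\le i+\mu(i)$.
   Context: $w[a..b]=w[a]\cdots w[b]$. For a position $i\in\{1,\dots,n\}$ of $w$, the local period $\mu(i)$ is the least positive integer $\mu$ such that $w[j]=w[j+\mu]$ for all $j$ with $\max\{1,i-\mu\}\le j$ and $j+\mu\le\min\{n,i+\mu-1\}$. *)

theory Defs
  imports Main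
begin

(* 1-indexed character access: w[k] = w ! (k - 1) for 1 <= k <= length w *)
definition ch :: "'a list \<Rightarrow> nat \<Rightarrow> 'a" where
  "ch w k = w ! (k - 1)"

definition is_local_period :: "'a list \<Rightarrow> nat \<Rightarrow> nat \<Rightarrow> bool" where
  "is_local_period w i m \<longleftrightarrow> 0 < m \<and>
     (\<forall>j::int. max 1 (int i - int m) \<le> j \<and> j + int m \<le> min (int (length w)) (int i + int m - 1)
        \<longrightarrow> ch w (nat j) = ch w (nat (j + int m)))"

definition local_period :: "'a list \<Rightarrow> nat \<Rightarrow> nat" where
  "local_period w i = (LEAST m. is_local_period w i m)"

end

theory Submission
  imports Defs "HOL-Library.List_Lexorder"
begin

text \<open>
  Write p = \<mu>(i) and read the root w[i..i+p-1] of the square around i as a cyclic word; by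
  minimality of p it has no period shorter than p. The left inequality is immediate from
  \<mu>(j) < p. For the right one take a least j with q = \<mu>(j) and j + q > i + p. The square
  at j makes the root agree with its shift by q from offset d = j - i on, up to a first
  mismatch, which lies beyond the square at i. Ordering the letters so that this mismatch
  decreases, every rotation of the root starting at an offset in [d, p] is beaten by the one
  starting q earlier, so a lexicographically least rotation starts at some offset l with
  0 < l < d. By the choice of j, the square at i + l with period m = \<mu>(i + l) lies inside
  the square at i, so it is a border of length m of that least rotation. A least rotation
  with a border of length m is fixed by rotation by m.
\<close>

section \<open>Least rotations of cyclic words\<close>

lemma rotate_eq_if_least_and_bordered:
  fixes xs :: "'a::linorder list"
  assumes "m \<le> length xs" and border: "take m xs = drop (length xs - m) xs"
    and "xs \<le> rotate m xs" and "xs \<le> rotate (length xs - m) xs"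
  shows "rotate m xs = xs"
proof -
  define b g g' where "b = take m xs" and "g = drop m xs" and "g' = take (length xs - m) xs"
  have xs: "xs = b @ g" "xs = g' @ b"
    using border unfolding b_def g_def g'_def by (metis append_take_drop_id)+
  have len: "length b = m" "length g' = length xs - m" "length g = length g'"
    using assms(1) by (simp_all add: b_def g_def g'_def)
  have "b @ g \<le> b @ g'"
    using assms(4) xs len by (metis rotate_append)
  then have "g \<le> g'"
    by (auto simp: list_le_def list_less_def dest: lexord_append_leftD)
  then have "g @ b \<le> g' @ b"
    using len(3) by (auto simp: list_le_def list_less_def intro: lexord_sufI)
  then have "rotate m xs \<le> xs"
    using xs len by (metis rotate_append)
  with assms(3) show ?thesis by simp
qed

text \<open>A cyclic word of length p is modelled as a p-periodic function on the integers.\<close>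

definition cyclic :: "nat \<Rightarrow> (int \<Rightarrow> 'a) \<Rightarrow> bool" where
  "cyclic p V \<longleftrightarrow> (\<forall>z. V (z mod int p) = V z)"

lemma cyclic_mod_eq: "cyclic p V \<Longrightarrow> z mod int p = z' mod int p \<Longrightarrow> V z = V z'"
  unfolding cyclic_def by metis

lemma cyclic_add_period: "cyclic p V \<Longrightarrow> V (z + int p) = V z"
  by (erule cyclic_mod_eq) simp

lemma cyclic_comp: "cyclic p V \<Longrightarrow> cyclic p (f \<circ> V)"
  by (simp add: cyclic_def)

lemma cyclic_periodic_if_window:
  assumes "cyclic p V" "0 < p" "\<And>t. t < p \<Longrightarrow> V (c + int t + m) = V (c + int t)"
  shows "V (z + m) = V z"
proof -
  define t where "t = nat ((z - c) mod int p)"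
  have "t < p" using assms(2) by (simp add: t_def nat_less_iff)
  have "z mod int p = (c + int t) mod int p"
    using assms(2) by (simp add: t_def mod_add_right_eq)
  then have "(z + m) mod int p = (c + int t + m) mod int p"
    by (metis mod_add_left_eq)
  then show ?thesis
    using cyclic_mod_eq[OF assms(1)] assms(3)[OF \<open>t < p\<close>]
      \<open>z mod int p = (c + int t) mod int p\<close> by metis
qed

definition rotation :: "nat \<Rightarrow> (int \<Rightarrow> 'a) \<Rightarrow> int \<Rightarrow> 'a list" where
  "rotation p V c = map (\<lambda>t. V (c + int t)) [0..<p]"

lemma length_rotation [simp]: "length (rotation p V c) = p"
  by (simp add: rotation_def)

lemma nth_rotation [simp]: "t < p \<Longrightarrow> rotation p V c ! t = V (c + int t)"
  by (simp add: rotation_def)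

lemma rotation_mod_eq:
  assumes "cyclic p V" "c mod int p = c' mod int p"
  shows "rotation p V c = rotation p V c'"
proof -
  have "(c + int t) mod int p = (c' + int t) mod int p" for t
    using assms(2) by (metis mod_add_left_eq)
  then have "V (c + int t) = V (c' + int t)" for t
    using cyclic_mod_eq[OF assms(1)] by blast
  then show ?thesis by (simp add: rotation_def)
qed

lemma rotate_rotation:
  assumes "cyclic p V"
  shows "rotate t (rotation p V c) = rotation p V (c + int t)"
proof (rule nth_equalityI)
  fix r assume "r < length (rotate t (rotation p V c))"
  then have r: "r < p" by simp
  then have "rotate t (rotation p V c) ! r = V (c + int ((t + r) mod p))"
    by (simp add: nth_rotate)
  also have "\<dots> = V (c + int t + int r)"
    by (rule cyclic_mod_eq[OF assms]) (simp add: zmod_int mod_add_right_eq add.assoc)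
  finally show "rotate t (rotation p V c) ! r = rotation p V (c + int t) ! r"
    using r by simp
qed simp

lemma rotation_less_if_first_mismatch:
  fixes V :: "int \<Rightarrow> 'a::linorder"
  assumes "s < p" and "\<forall>t<s. V (c' + int t) = V (c + int t)" and "V (c' + int s) < V (c + int s)"
  shows "rotation p V c' < rotation p V c"
proof -
  have "take s (rotation p V c') = take s (rotation p V c)"
    using assms by (intro nth_equalityI) auto
  then show ?thesis
    unfolding list_less_def lexord_take_index_conv using assms by auto
qed

lemma exists_least_rotation:
  fixes V :: "int \<Rightarrow> 'a::linorder"
  assumes "cyclic p V" "0 < p"
  obtains l where "0 \<le> l" "l < int p" "\<forall>c. rotation p V l \<le> rotation p V c"
proof -
  let ?S = "rotation p V ` {0..<int p}"
  have "Min ?S \<in> ?S" using assms(2) by (intro Min_in) auto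
  then obtain l where l: "0 \<le> l" "l < int p" "rotation p V l = Min ?S" by auto
  have "rotation p V l \<le> rotation p V c" for c
  proof -
    have "rotation p V c = rotation p V (c mod int p)"
      using assms(1) by (rule rotation_mod_eq) simp
    moreover have "rotation p V (c mod int p) \<in> ?S" using assms(2) by simp
    ultimately show ?thesis using l(3) by simp
  qed
  with l that show ?thesis by blast
qed

lemma periodic_if_least_rotation_bordered:
  fixes V :: "int \<Rightarrow> 'a::linorder"
  assumes "cyclic p V" "0 < p" "m \<le> p"
    and least: "\<forall>c. rotation p V l \<le> rotation p V c"
    and border: "\<forall>r<m. V (l - int m + int r) = V (l + int r)"
  shows "V (z + int m) = V z"
proof -
  let ?R = "rotation p V l"
  have "take m ?R = drop (p - m) ?R"
  proof (rule nth_equalityI)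
    fix r assume "r < length (take m ?R)"
    then have "r < m" using assms(3) by simp
    then have "V (l + int r) = V (l - int m + int r + int p)"
      using border cyclic_add_period[OF assms(1)] by simp
    then show "take m ?R ! r = drop (p - m) ?R ! r"
      using \<open>r < m\<close> assms(3) by (simp add: algebra_simps)
  qed (use assms(3) in simp)
  then have "rotate m ?R = ?R"
    using assms(3) least by (intro rotate_eq_if_least_and_bordered) (simp_all add: rotate_rotation[OF assms(1)])
  then have "rotation p V (l + int m) = ?R"
    by (simp add: rotate_rotation[OF assms(1)])
  then have shifted: "V (l + int t + int m) = V (l + int t)" if "t < p" for t
    using nth_rotation[OF that, of V "l + int m"] that by (simp add: ac_simps)
  show ?thesis
    by (rule cyclic_periodic_if_window[OF assms(1,2), where c = l]) (rule shifted)
qed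


lemma exists_first_mismatch:
  assumes "cyclic p V" "0 < p" "V (z + q) \<noteq> V z"
  obtains s where "s < p" "V (c - q + int s) \<noteq> V (c + int s)"
    "\<forall>t<s. V (c - q + int t) = V (c + int t)"
proof -
  obtain n where "n < p" "V (c - q + int n) \<noteq> V (c + int n)"
    using cyclic_periodic_if_window[OF assms(1,2), of "c - q" q] assms(3) by (metis add.commute add.left_commute diff_add_cancel)
  then obtain s where "s \<le> n" "V (c - q + int s) \<noteq> V (c + int s)"
    "\<forall>t<s. V (c - q + int t) = V (c + int t)"
    using ex_least_nat_le[of "\<lambda>s. V (c - q + int s) \<noteq> V (c + int s)"] by blast
  with \<open>n < p\<close> show ?thesis by (intro that) auto
qed

lemma least_rotation_below_first_mismatch:
  fixes U :: "int \<Rightarrow> 'a::linorder"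
  assumes "cyclic p U" "0 < p" "d \<le> int p" "s < p" "int p \<le> d + int s"
    and agree: "\<forall>t<s. U (d - q + int t) = U (d + int t)"
    and mismatch: "U (d - q + int s) < U (d + int s)"
  obtains l :: nat where "0 < l" "int l < d" "\<forall>c. rotation p U (int l) \<le> rotation p U c"
proof -
  let ?R = "rotation p U"
  have descent: "?R (k - q) < ?R k" if "d \<le> k" "k \<le> int p" for k
  proof (rule rotation_less_if_first_mismatch)
    define s' where "s' = nat (d + int s - k)"
    have s': "int s' = d + int s - k" using that assms(5) by (simp add: s'_def)
    show "s' < p" using s' that assms(4) by linarith
    show "U (k - q + int s') < U (k + int s')"
      using mismatch s' by (simp add: algebra_simps)
    show "\<forall>t<s'. U (k - q + int t) = U (k + int t)"
    proof (intro allI impI)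
      fix t assume "t < s'"
      define t' where "t' = nat (k + int t - d)"
      have "int t' = k + int t - d" using that by (simp add: t'_def)
      moreover have "t' < s" using \<open>t < s'\<close> s' \<open>int t' = k + int t - d\<close> by linarith
      then have "U (d - q + int t') = U (d + int t')" using agree by blast
      ultimately show "U (k - q + int t) = U (k + int t)"
        by (simp add: algebra_simps)
    qed
  qed
  obtain l where l: "0 \<le> l" "l < int p" and least: "\<forall>c. ?R l \<le> ?R c"
    using exists_least_rotation[OF assms(1,2)] by blast
  have "l \<noteq> 0"
  proof
    assume "l = 0"
    then have "?R l = ?R (int p)" using rotation_mod_eq[OF assms(1)] by simp
    then have "?R (int p - q) < ?R l" using descent[of "int p"] assms(3) by simp
    moreover have "?R l \<le> ?R (int p - q)" using least by blast
    ultimately show False by simp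
  qed
  moreover have "\<not> d \<le> l"
  proof
    assume "d \<le> l"
    then have "?R (l - q) < ?R l" using descent[of l] l by simp
    moreover have "?R l \<le> ?R (l - q)" using least by blast
    ultimately show False by simp
  qed
  ultimately have "0 < nat l" "int (nat l) < d" using l by auto
  with l least show ?thesis using that[of "nat l"] by simp
qed

lemma exists_inj_on_int_less:
  assumes "finite A" "a \<in> A" "b \<in> A" "a \<noteq> b"
  obtains g :: "'a \<Rightarrow> int" where "inj_on g A" "g a < g b"
proof -
  obtain f :: "'a \<Rightarrow> nat" where f: "inj_on f A"
    using finite_imp_inj_to_nat_seg[OF assms(1)] by blast
  define g where "g x = (if f a < f b then int (f x) else - int (f x))" for x
  have "inj_on g A" using f by (auto simp: g_def inj_on_def)
  moreover have "f a \<noteq> f b" using f assms(2-4) by (meson inj_on_contraD)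
  then have "g a < g b" by (auto simp: g_def)
  ultimately show ?thesis by (rule that)
qed

lemma is_local_periodI:
  assumes "0 < m"
    and "\<And>z. max 1 (int x - int m) \<le> z \<Longrightarrow> z + int m \<le> min (int (length w)) (int x + int m - 1)
           \<Longrightarrow> ch w (nat z) = ch w (nat (z + int m))"
  shows "is_local_period w x m"
  using assms by (simp add: is_local_period_def)

lemma is_local_periodD:
  "is_local_period w x m \<Longrightarrow> max 1 (int x - int m) \<le> z \<Longrightarrow>
   z + int m \<le> min (int (length w)) (int x + int m - 1) \<Longrightarrow> ch w (nat z) = ch w (nat (z + int m))"
  by (simp add: is_local_period_def)

lemma is_local_period_length: "0 < length w \<Longrightarrow> is_local_period w x (length w)"
  by (rule is_local_periodI) auto

lemma is_local_period_local_period: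
  assumes "0 < length w"
  shows "is_local_period w x (local_period w x)"
  using is_local_period_length[OF assms] unfolding local_period_def by (rule LeastI)

lemma local_period_le: "is_local_period w x m \<Longrightarrow> local_period w x \<le> m"
  unfolding local_period_def by (rule Least_le)

lemma local_period_pos: "0 < length w \<Longrightarrow> 0 < local_period w x"
  using is_local_period_local_period by (auto simp: is_local_period_def)

section \<open>Squares centred at a position\<close>

text \<open>
  The factor w[i-p..i+p-1] is a square of period p; root reads its root w[i..i+p-1]
  cyclically, with offset 0 at position i.
\<close>

locale centred_square =
  fixes w :: "'a list" and i p :: nat
  assumes period: "is_local_period w i p"
    and left_end: "1 \<le> int i - int p"
    and right_end: "int i + int p - 1 \<le> int (length w)"
begin

definition root :: "int \<Rightarrow> 'a" where
  "root z = ch w (nat (int i + z mod int p))"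

lemma period_pos: "0 < p"
  using period by (simp add: is_local_period_def)

lemma cyclic_root: "cyclic p root"
  by (simp add: cyclic_def root_def)

lemma root_in_set: "root z \<in> set w"
proof -
  have "0 \<le> z mod int p" "z mod int p < int p" using period_pos by simp_all
  then have "nat (int i + z mod int p) - 1 < length w" using left_end right_end by linarith
  then show ?thesis by (simp add: root_def ch_def)
qed

lemma ch_eq_root:
  assumes "- int p \<le> z" "z < int p"
  shows "ch w (nat (int i + z)) = root z"
proof (cases "0 \<le> z")
  case True
  then show ?thesis using assms by (simp add: root_def)
next
  case False
  have "(z + int p) mod int p = z + int p"
    using assms False by (intro mod_pos_pos_trivial) auto
  then have "z mod int p = z + int p" by simp
  moreover have "ch w (nat (int i + z)) = ch w (nat (int i + z + int p))"
    by (rule is_local_periodD[OF period]) (use assms False left_end right_end in auto)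
  ultimately show ?thesis by (simp add: root_def add.assoc)
qed

lemma root_shift_if_local_period:
  assumes "is_local_period w j q"
    and "int j - int q \<le> int i + y" "- int p \<le> y" "y < int j - int i" "y + int q < int p"
  shows "root y = root (y + int q)"
proof -
  have "ch w (nat (int i + y)) = ch w (nat (int i + y + int q))"
    by (rule is_local_periodD[OF assms(1)]) (use assms left_end right_end in auto)
  moreover have "ch w (nat (int i + y)) = root y"
    using assms(3,5) by (intro ch_eq_root) auto
  moreover have "ch w (nat (int i + (y + int q))) = root (y + int q)"
    using assms(3,5) by (intro ch_eq_root) auto
  ultimately show ?thesis by (simp add: add.assoc)
qed

lemma is_local_period_if_root_border:
  assumes "0 < m" "m < p" and border: "\<forall>r<m. root (int r - int m) = root (int r)"
  shows "is_local_period w i m"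
proof (rule is_local_periodI[OF assms(1)])
  fix z assume "max 1 (int i - int m) \<le> z" "z + int m \<le> min (int (length w)) (int i + int m - 1)"
  then have z: "int i - int m \<le> z" "z < int i" by simp_all
  define r where "r = nat (z - (int i - int m))"
  have r: "int r = z - int i + int m" "r < m" using z by (simp_all add: r_def)
  have "ch w (nat z) = root (int r - int m)"
    using ch_eq_root[of "int r - int m"] r assms(2) by simp
  moreover have "ch w (nat (z + int m)) = root (int r)"
    using ch_eq_root[of "int r"] r assms(2) by simp
  ultimately show "ch w (nat z) = ch w (nat (z + int m))"
    using border r(2) by simp
qed

lemma length_pos: "0 < length w"
  using left_end right_end period_pos by linarith

end

locale minimal_centred_square = centred_square +
  assumes minimal: "p = local_period w i"
begin

lemma root_no_short_border:
  assumes "0 < m" "m < p"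
  obtains r where "r < m" "root (int r - int m) \<noteq> root (int r)"
proof -
  have "\<not> is_local_period w i m"
    using local_period_le minimal assms by fastforce
  then show ?thesis
    using is_local_period_if_root_border assms that by blast
qed

lemma root_primitive:
  assumes "0 < m" "m < p"
  obtains z where "root (z + int m) \<noteq> root z"
proof -
  obtain r where "root (int r - int m) \<noteq> root (int r)"
    using root_no_short_border[OF assms] .
  then show ?thesis using that[of "int r - int m"] by simp
qed

lemma least_rotation_in_overhang:
  assumes j: "i < j" "j < i + p" "local_period w j < p" "i + p < j + local_period w j"
  obtains g :: "'a \<Rightarrow> int" and l :: nat where "inj_on g (set w)" "0 < l" "i + l < j"
    "\<forall>c. rotation p (g \<circ> root) (int l) \<le> rotation p (g \<circ> root) c"
proof -
  define q d where "q = local_period w j" and "d = int j - int i"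
  have q: "0 < q" "q < p" "is_local_period w j q"
    using j length_pos local_period_pos is_local_period_local_period by (auto simp: q_def)
  have shift: "root y = root (y + int q)" if "d - int q \<le> y" "y + int q < int p" for y
    using root_shift_if_local_period[OF q(3)] that j q(2) by (simp add: q_def d_def)
  txt \<open>Otherwise the square at j would give the root a border of length p - q.\<close>
  have "int q < d"
  proof (rule ccontr)
    assume "\<not> int q < d"
    obtain r where r: "r < p - q" "root (int r - int (p - q)) \<noteq> root (int r)"
      using root_no_short_border[of "p - q"] q by auto
    have "root (int r - int (p - q)) = root (int r - int (p - q) + int p)"
      using cyclic_add_period[OF cyclic_root] by simp
    also have "\<dots> = root (int r)"
      using shift[of "int r"] r(1) q(2) \<open>\<not> int q < d\<close> by simp
    finally show False using r(2) by simp
  qed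
  obtain z where "root (z + int q) \<noteq> root z"
    using root_primitive[OF q(1,2)] .
  then obtain s where s: "s < p" "root (d - int q + int s) \<noteq> root (d + int s)"
    and agree: "\<forall>t<s. root (d - int q + int t) = root (d + int t)"
    by (rule exists_first_mismatch[OF cyclic_root period_pos, where c = d])
  have "int p \<le> d + int s"
  proof (rule ccontr)
    assume "\<not> int p \<le> d + int s"
    then have "root (d - int q + int s) = root (d + int s)"
      using shift[of "d - int q + int s"] by simp
    with s(2) show False by simp
  qed
  txt \<open>The alphabet is unordered: rank the letters so that the first mismatch decreases.\<close>
  obtain g :: "'a \<Rightarrow> int" where g: "inj_on g (set w)"
    "g (root (d - int q + int s)) < g (root (d + int s))"
    by (rule exists_inj_on_int_less[OF finite_set root_in_set root_in_set s(2)])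
  obtain l where "0 < l" "int l < d" "\<forall>c. rotation p (g \<circ> root) (int l) \<le> rotation p (g \<circ> root) c"
  proof (rule least_rotation_below_first_mismatch[OF cyclic_comp[OF cyclic_root] period_pos])
    show "d \<le> int p" using j by (simp add: d_def)
  qed (use s agree g \<open>int p \<le> d + int s\<close> in auto)
  then show ?thesis
    using that g(1) by (simp add: d_def)
qed

lemma overhang_at_least_rotation:
  fixes g :: "'a \<Rightarrow> 'b::linorder"
  assumes g: "inj_on g (set w)" and l: "0 < l" "l < p"
    and least: "\<forall>c. rotation p (g \<circ> root) (int l) \<le> rotation p (g \<circ> root) c"
    and "local_period w (i + l) < p"
  shows "i + p < i + l + local_period w (i + l)"
proof (rule ccontr)
  define m where "m = local_period w (i + l)"
  assume "\<not> i + p < i + l + local_period w (i + l)"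
  then have m: "0 < m" "m < p" "is_local_period w (i + l) m" "l + m \<le> p"
    using assms length_pos local_period_pos is_local_period_local_period by (auto simp: m_def)
  have "root (int l - int m + int r) = root (int l + int r)" if "r < m" for r
    using root_shift_if_local_period[OF m(3), of "int l - int m + int r"] that m(2,4) by simp
  then have border: "\<forall>r<m. (g \<circ> root) (int l - int m + int r) = (g \<circ> root) (int l + int r)"
    by simp
  have "(g \<circ> root) (z + int m) = (g \<circ> root) z" for z
    using m(2) by (intro periodic_if_least_rotation_bordered[OF cyclic_comp[OF cyclic_root] period_pos _ least border]) simp
  then have "root (z + int m) = root z" for z
    using g root_in_set by (simp add: inj_on_eq_iff)
  then show False
    using root_primitive[OF m(1,2)] by metis
qed

lemma overhang_descends:
  assumes j: "i < j" "j < i + p" "local_period w j < p" "i + p < j + local_period w j"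
    and below: "\<forall>j'. i < j' \<and> j' < j \<longrightarrow> local_period w j' < p"
  obtains j' where "i < j'" "j' < j" "i + p < j' + local_period w j'"
proof -
  obtain g :: "'a \<Rightarrow> int" and l :: nat where g: "inj_on g (set w)" and l: "0 < l" "i + l < j"
    and least: "\<forall>c. rotation p (g \<circ> root) (int l) \<le> rotation p (g \<circ> root) c"
    by (rule least_rotation_in_overhang[OF assms(1-4)])
  have "i + p < i + l + local_period w (i + l)"
    using overhang_at_least_rotation[OF g _ _ least] l j below by simp
  with l show ?thesis by (intro that) auto
qed

end

theorem lemma14:
  fixes w :: "'a list" and i j :: nat
  defines "n \<equiv> length w"
  assumes "1 \<le> i" and "i \<le> n"
    and "int i - int (local_period w i) \<ge> 1"
    and "int i + int (local_period w i) - 1 \<le> int n"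
    and "local_period w i > 1"
    and "i < j" and "j < i + local_period w i"
    and "\<forall>j'. i < j' \<and> j' \<le> j \<longrightarrow> local_period w j' < local_period w i"
  shows "int i - int (local_period w i) \<le> int j - int (local_period w j)
       \<and> int j + int (local_period w j) \<le> int i + int (local_period w i)"
proof -
  let ?p = "local_period w i"
  have "0 < length w" using assms(2,3) unfolding n_def by linarith
  then interpret minimal_centred_square w i ?p
    using assms(4,5) by unfold_locales (simp_all add: is_local_period_local_period n_def)
  have "j + local_period w j \<le> i + ?p"
  proof (rule ccontr)
    assume "\<not> ?thesis"
    then obtain k where k: "i < k" "k \<le> j" "i + ?p < k + local_period w k"
      and least: "\<forall>k'<k. \<not> (i < k' \<and> k' \<le> j \<and> i + ?p < k' + local_period w k')"
      using exists_least_iff[of "\<lambda>k. i < k \<and> k \<le> j \<and> i + ?p < k + local_period w k"] assms(7)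
      by (metis not_le order_refl)
    obtain k' where "i < k'" "k' < k" "i + ?p < k' + local_period w k'"
      by (rule overhang_descends[of k]) (use k assms(8,9) in auto)
    with least k(2) show False by auto
  qed
  moreover have "local_period w j < ?p" using assms(7,9) by blast
  ultimately show ?thesis using assms(7) by linarith
qed

end
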